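(* Assume $Q_{12}>0$. For any $\gamma>0$, $$H(\tilde C_i^{(n)}|\tilde{\mathbf X}_{3-i})\ge n[H(X_i|X_{3-i})-\gamma]+\log Q_{12},\quad i=1,2,$$ $$H(\tilde C_1^{(n)}\tilde C_2^{(n)})\ge n[H(X_1X_2)-\gamma]+\log Q_{12}.$$
   Context: Logs base 2. $\mathcal X_1,\mathcal X_2$ finite; $(X_1,X_2)\sim p_{X_1X_2}$, $(K_1,K_2)\sim p_{K_1K_2}$ on $\mathcal X_1\times\mathcal X_2$. At block length $n$, $(\mathbf X_1,\mathbf X_2)\sim p^n_{X_1X_2}$ i.i.d., $(\mathbf K_1,\mathbf K_2)\sim p^n_{K_1K_2}$ i.i.d., keys independent of sources. A distributed source encryption system: finite $\mathcal C_i^{(n)}$, maps $\Phi_i^{(n)}:\mathcal X_i^n\times\mathcal X_i^n\to\mathcal C_i^{(n)}$ (key, plaintext) and $\Psi^{(n)}$, such that there are maps $\phi_i^{(n)}$, $\psi^{(n)}$ with $\Psi^{(n)}(\mathbf k_1,\mathbf k_2,\Phi_1^{(n)}(\mathbf k_1,\mathbf x_1),\Phi_2^{(n)}(\mathbf k_2,\mathbf x_2))=\psi^{(n)}(\phi_1^{(n)}(\mathbf x_1),\phi_2^{(n)}(\mathbf x_2))$ for all arguments. $C_i^{(n)}:=\Phi_i^{(n)}(\mathbf K_i,\mathbf X_i)$. $\mathcal D^{(n)}:=\{(\mathbf x_1,\mathbf x_2):\psi^{(n)}(\phi_1^{(n)}(\mathbf x_1),\phi_2^{(n)}(\mathbf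 x_2))=(\mathbf x_1,\mathbf x_2)\}$. For $\gamma>0$, $\tilde{\mathcal A}^{(n)}_\gamma$ is the set of $(\mathbf x_1,\mathbf x_2)$ with $\bigl|\frac1n\log\frac1{p^n_{X_i|X_{3-i}}(\mathbf x_i|\mathbf x_{3-i})}-H(X_i|X_{3-i})\bigr|\le\gamma$ ($i=1,2$) and $\bigl|\frac1n\log\frac1{p^n_{X_1X_2}(\mathbf x_1,\mathbf x_2)}-H(X_1X_2)\bigr|\le\gamma$, and $\tilde{\mathcal D}^{(n)}_\gamma:=\tilde{\mathcal A}^{(n)}_\gamma\cap\mathcal D^{(n)}$. $Q_{12}:=p^n_{X_1X_2}(\tilde{\mathcal D}^{(n)}_\gamma)$. The random pair $(\tilde{\mathbf X}_1,\tilde{\mathbf X}_2)$ has law $p^n_{X_1X_2}(\mathbf x_1,\mathbf x_2)/Q_{12}$ on $\tilde{\mathcal D}^{(n)}_\gamma$ and $0$ elsewhere, independent of $(\mathbf K_1,\mathbf K_2)$; $\tilde C_i^{(n)}:=\Phi_i^{(n)}(\mathbf K_i,\tilde{\mathbf X}_i)$. Equivalently, the joint law of $(\tilde C_1^{(n)},\tilde C_2^{(n)},\tilde{\mathbf X}_1,\tilde{\mathbf X}_2)$ is that of $(C_1^{(n)},C_2^{(n)},\mathbf X_1,\mathbf X_2)$ conditioned on $(\mathbf X_1,\mathbf X_2)\in\tilde{\mathcal D}^{(n)}_\gamma$. *)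

theory Defs
  imports Complex_Main
begin

definition shannon :: "('x \<Rightarrow> real) \<Rightarrow> 'x set \<Rightarrow> real" where
  "shannon f S = - (\<Sum>x\<in>S. f x * log 2 (f x))"

definition law :: "('w \<Rightarrow> real) \<Rightarrow> 'w set \<Rightarrow> ('w \<Rightarrow> 'y) \<Rightarrow> 'y \<Rightarrow> real" where
  "law P Om g y = (\<Sum>w\<in>{w\<in>Om. g w = y}. P w)"

definition rv_entropy :: "('w \<Rightarrow> real) \<Rightarrow> 'w set \<Rightarrow> ('w \<Rightarrow> 'y) \<Rightarrow> real" where
  "rv_entropy P Om g = shannon (law P Om g) (g ` Om)"

definition rv_cond_entropy ::
  "('w \<Rightarrow> real) \<Rightarrow> 'w set \<Rightarrow> ('w \<Rightarrow> 'y) \<Rightarrow> ('w \<Rightarrow> 'z) \<Rightarrow> real" where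
  "rv_cond_entropy P Om g h = rv_entropy P Om (\<lambda>w. (g w, h w)) - rv_entropy P Om h"

definition marg1 :: "('a \<times> 'b::finite \<Rightarrow> real) \<Rightarrow> 'a \<Rightarrow> real" where
  "marg1 p a = (\<Sum>b\<in>UNIV. p (a, b))"

definition marg2 :: "('a::finite \<times> 'b \<Rightarrow> real) \<Rightarrow> 'b \<Rightarrow> real" where
  "marg2 p b = (\<Sum>a\<in>UNIV. p (a, b))"

definition H12 :: "('a::finite \<times> 'b::finite \<Rightarrow> real) \<Rightarrow> real" where
  "H12 p = shannon p UNIV"

definition H1g2 :: "('a::finite \<times> 'b::finite \<Rightarrow> real) \<Rightarrow> real" where
  "H1g2 p = shannon p UNIV - shannon (marg2 p) UNIV"

definition H2g1 :: "('a::finite \<times> 'b::finite \<Rightarrow> real) \<Rightarrow> real" where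
  "H2g1 p = shannon p UNIV - shannon (marg1 p) UNIV"

definition pn :: "('a \<times> 'b \<Rightarrow> real) \<Rightarrow> nat \<Rightarrow> 'a list \<Rightarrow> 'b list \<Rightarrow> real" where
  "pn p n x1 x2 = (\<Prod>i<n. p (x1 ! i, x2 ! i))"

definition pn_1g2 :: "('a::finite \<times> 'b \<Rightarrow> real) \<Rightarrow> nat \<Rightarrow> 'a list \<Rightarrow> 'b list \<Rightarrow> real" where
  "pn_1g2 p n x1 x2 = (\<Prod>i<n. p (x1 ! i, x2 ! i) / marg2 p (x2 ! i))"

definition pn_2g1 :: "('a \<times> 'b::finite \<Rightarrow> real) \<Rightarrow> nat \<Rightarrow> 'a list \<Rightarrow> 'b list \<Rightarrow> real" where
  "pn_2g1 p n x1 x2 = (\<Prod>i<n. p (x1 ! i, x2 ! i) / marg1 p (x1 ! i))"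

text \<open>Modified typical set A~_gamma^(n). Sequences of probability zero have
  log(1/p) = +infinity and hence are never typical; this is made explicit.\<close>
definition typ_set :: "('a::finite \<times> 'b::finite \<Rightarrow> real) \<Rightarrow> nat \<Rightarrow> real \<Rightarrow> ('a list \<times> 'b list) set" where
  "typ_set p n \<gamma> = {(x1, x2). length x1 = n \<and> length x2 = n \<and> pn p n x1 x2 > 0 \<and>
     \<bar>1 / real n * log 2 (1 / pn_1g2 p n x1 x2) - H1g2 p\<bar> \<le> \<gamma> \<and>
     \<bar>1 / real n * log 2 (1 / pn_2g1 p n x1 x2) - H2g1 p\<bar> \<le> \<gamma> \<and>
     \<bar>1 / real n * log 2 (1 / pn p n x1 x2) - H12 p\<bar> \<le> \<gamma>}"

definition dec_set :: "nat \<Rightarrow> ('a list \<Rightarrow> 'e) \<Rightarrow> ('b list \<Rightarrow> 'f) \<Rightarrow>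
    ('e \<Rightarrow> 'f \<Rightarrow> 'a list \<times> 'b list) \<Rightarrow> ('a list \<times> 'b list) set" where
  "dec_set n \<phi>1 \<phi>2 \<psi> = {(x1, x2). length x1 = n \<and> length x2 = n \<and> \<psi> (\<phi>1 x1) (\<phi>2 x2) = (x1, x2)}"

definition Dtil :: "('a::finite \<times> 'b::finite \<Rightarrow> real) \<Rightarrow> nat \<Rightarrow> real \<Rightarrow> ('a list \<Rightarrow> 'e) \<Rightarrow> ('b list \<Rightarrow> 'f) \<Rightarrow>
    ('e \<Rightarrow> 'f \<Rightarrow> 'a list \<times> 'b list) \<Rightarrow> ('a list \<times> 'b list) set" where
  "Dtil p n \<gamma> \<phi>1 \<phi>2 \<psi> = typ_set p n \<gamma> \<inter> dec_set n \<phi>1 \<phi>2 \<psi>"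

definition Q12 :: "('a::finite \<times> 'b::finite \<Rightarrow> real) \<Rightarrow> nat \<Rightarrow> real \<Rightarrow> ('a list \<Rightarrow> 'e) \<Rightarrow> ('b list \<Rightarrow> 'f) \<Rightarrow>
    ('e \<Rightarrow> 'f \<Rightarrow> 'a list \<times> 'b list) \<Rightarrow> real" where
  "Q12 p n \<gamma> \<phi>1 \<phi>2 \<psi> = (\<Sum>(x1, x2)\<in>Dtil p n \<gamma> \<phi>1 \<phi>2 \<psi>. pn p n x1 x2)"

text \<open>Sample space of (K1, K2, X~1, X~2) at block length n.\<close>
definition Omega :: "nat \<Rightarrow> ('a list \<times> 'b list \<times> 'a list \<times> 'b list) set" where
  "Omega n = {(k1, k2, x1, x2). length k1 = n \<and> length k2 = n \<and> length x1 = n \<and> length x2 = n}"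

definition Ptil :: "('a::finite \<times> 'b::finite \<Rightarrow> real) \<Rightarrow> ('a \<times> 'b \<Rightarrow> real) \<Rightarrow> nat \<Rightarrow> real \<Rightarrow>
    ('a list \<Rightarrow> 'e) \<Rightarrow> ('b list \<Rightarrow> 'f) \<Rightarrow> ('e \<Rightarrow> 'f \<Rightarrow> 'a list \<times> 'b list) \<Rightarrow>
    'a list \<times> 'b list \<times> 'a list \<times> 'b list \<Rightarrow> real" where
  "Ptil p pk n \<gamma> \<phi>1 \<phi>2 \<psi> = (\<lambda>(k1, k2, x1, x2). pn pk n k1 k2 *
     (if (x1, x2) \<in> Dtil p n \<gamma> \<phi>1 \<phi>2 \<psi> then pn p n x1 x2 / Q12 p n \<gamma> \<phi>1 \<phi>2 \<psi> else 0))"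

end

theory Submission
  imports Defs
begin

text \<open>Given the keys, the legitimate decoder recovers the source pair from the
  ciphertexts on \<open>D~\<close>. Hence, for fixed keys, each value of \<open>(C1, C2)\<close> or of \<open>(C1, X2)\<close>
  comes from at most one source pair in \<open>D~\<close>, and its conditional probability is at most
  \<open>p^n(x) / Q12\<close> for a single typical \<open>x\<close>: at most \<open>2 powr (-n (H - \<gamma>)) / Q12\<close>, times
  the product of the marginals of \<open>X2\<close> in the conditional case. If every atom of a random
  variable has probability at most \<open>c\<close>, its entropy is at least \<open>-log c\<close>; in the conditional
  case the marginal factor is absorbed by Gibbs' inequality.\<close>

lemma rv_entropy_eq_sum:
  assumes "finite Om"
  shows "rv_entropy P Om g = - (\<Sum>w\<in>Om. P w * log 2 (law P Om g (g w)))"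
proof -
  have "(\<Sum>y\<in>g ` Om. law P Om g y * log 2 (law P Om g y))
      = (\<Sum>y\<in>g ` Om. \<Sum>w\<in>{w\<in>Om. g w = y}. P w * log 2 (law P Om g (g w)))"
    by (rule sum.cong) (auto simp: law_def sum_distrib_right)
  also have "\<dots> = (\<Sum>w\<in>Om. P w * log 2 (law P Om g (g w)))"
    by (rule sum.image_gen[symmetric]) (rule assms)
  finally show ?thesis unfolding rv_entropy_def shannon_def by simp
qed

lemma pmf_le_law:
  assumes "finite Om" and "\<And>v. v \<in> Om \<Longrightarrow> P v \<ge> 0" and "w \<in> Om"
  shows "P w \<le> law P Om g (g w)"
  unfolding law_def using assms by (intro member_le_sum) auto

lemma rv_entropy_ge_of_law_le:
  assumes fin: "finite Om" and nonneg: "\<And>w. w \<in> Om \<Longrightarrow> P w \<ge> 0"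
    and sum1: "(\<Sum>w\<in>Om. P w) = 1" and "c > 0"
    and m_pos: "\<And>w. w \<in> Om \<Longrightarrow> P w > 0 \<Longrightarrow> m w > 0"
    and law_le: "\<And>w. w \<in> Om \<Longrightarrow> P w > 0 \<Longrightarrow> law P Om g (g w) \<le> c * m w"
  shows "rv_entropy P Om g \<ge> - log 2 c - (\<Sum>w\<in>Om. P w * log 2 (m w))"
proof -
  have "P w * (- log 2 c - log 2 (m w)) \<le> - (P w * log 2 (law P Om g (g w)))"
    if w: "w \<in> Om" for w
  proof (cases "P w > 0")
    case True
    have "P w \<le> law P Om g (g w)"
      using fin nonneg w by (rule pmf_le_law)
    then have "log 2 (law P Om g (g w)) \<le> log 2 (c * m w)"
      using law_le[OF w True] True by simp
    also have "\<dots> = log 2 c + log 2 (m w)"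
      using \<open>c > 0\<close> m_pos[OF w True] by (simp add: log_mult)
    finally show ?thesis
      using mult_left_mono[of _ _ "P w"] True by (fastforce simp: algebra_simps)
  next
    case False
    then show ?thesis using nonneg[OF w] by simp
  qed
  then have "(\<Sum>w\<in>Om. P w * (- log 2 c - log 2 (m w))) \<le> rv_entropy P Om g"
    unfolding rv_entropy_eq_sum[OF fin] sum_negf[symmetric] by (rule sum_mono)
  then show ?thesis
    using sum1 by (simp add: right_diff_distrib sum_subtractf sum_negf flip: sum_distrib_right)
qed

lemma rv_entropy_le_cross_entropy:
  assumes fin: "finite Om" and nonneg: "\<And>w. w \<in> Om \<Longrightarrow> P w \<ge> 0"
    and sum1: "(\<Sum>w\<in>Om. P w) = 1"
    and m_nonneg: "\<And>z. m z \<ge> 0" and m_sum: "(\<Sum>z\<in>h ` Om. m z) \<le> 1"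
    and m_pos: "\<And>w. w \<in> Om \<Longrightarrow> P w > 0 \<Longrightarrow> m (h w) > 0"
  shows "rv_entropy P Om h \<le> - (\<Sum>w\<in>Om. P w * log 2 (m (h w)))"
proof -
  define L where "L = law P Om h"
  have pointwise:
    "P w * (log 2 (m (h w)) - log 2 (L (h w))) \<le> (P w * m (h w) / L (h w) - P w) / ln 2"
    if w: "w \<in> Om" for w
  proof (cases "P w > 0")
    case True
    have "P w \<le> L (h w)"
      unfolding L_def using fin nonneg w by (rule pmf_le_law)
    then have L_pos: "L (h w) > 0"
      using True by linarith
    have "ln (m (h w) / L (h w)) \<le> m (h w) / L (h w) - 1"
      using m_pos[OF w True] L_pos by (intro ln_le_minus_one) simp
    then have "(ln (m (h w)) - ln (L (h w))) / ln 2 \<le> (m (h w) / L (h w) - 1) / ln 2"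
      using m_pos[OF w True] L_pos by (intro divide_right_mono) (simp_all add: ln_div)
    then have "log 2 (m (h w)) - log 2 (L (h w)) \<le> (m (h w) / L (h w) - 1) / ln 2"
      by (simp add: log_def diff_divide_distrib)
    then show ?thesis
      using True mult_left_mono[of _ _ "P w"] by (fastforce simp: field_simps)
  next
    case False
    then show ?thesis using nonneg[OF w] by simp
  qed
  have "(\<Sum>w\<in>Om. P w * m (h w) / L (h w))
      = (\<Sum>z\<in>h ` Om. \<Sum>w\<in>{w\<in>Om. h w = z}. P w * m (h w) / L (h w))"
    by (rule sum.image_gen) (rule fin)
  also have "\<dots> = (\<Sum>z\<in>h ` Om. L z * m z / L z)"
    by (rule sum.cong) (auto simp: L_def law_def sum_distrib_right sum_divide_distrib)
  also have "\<dots> \<le> (\<Sum>z\<in>h ` Om. m z)"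
    by (rule sum_mono) (simp add: m_nonneg)
  finally have "(\<Sum>w\<in>Om. P w * m (h w) / L (h w)) \<le> 1"
    using m_sum by linarith
  have "(\<Sum>w\<in>Om. P w * (log 2 (m (h w)) - log 2 (L (h w))))
      \<le> (\<Sum>w\<in>Om. (P w * m (h w) / L (h w) - P w) / ln 2)"
    by (rule sum_mono) (rule pointwise)
  also have "\<dots> = ((\<Sum>w\<in>Om. P w * m (h w) / L (h w)) - 1) / ln 2"
    using sum1 by (simp add: sum_subtractf flip: sum_divide_distrib)
  also have "\<dots> \<le> 0"
    using \<open>(\<Sum>w\<in>Om. P w * m (h w) / L (h w)) \<le> 1\<close> by (intro divide_nonpos_pos) simp_all
  finally have "(\<Sum>w\<in>Om. P w * (log 2 (m (h w)) - log 2 (L (h w)))) \<le> 0" .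
  then show ?thesis
    unfolding rv_entropy_eq_sum[OF fin] L_def by (simp add: right_diff_distrib sum_subtractf)
qed

lemma rv_cond_entropy_ge_of_law_le:
  assumes fin: "finite Om" and nonneg: "\<And>w. w \<in> Om \<Longrightarrow> P w \<ge> 0"
    and sum1: "(\<Sum>w\<in>Om. P w) = 1" and c: "c > 0"
    and m_nonneg: "\<And>z. m z \<ge> 0" and m_sum: "(\<Sum>z\<in>h ` Om. m z) \<le> 1"
    and law_le: "\<And>w. w \<in> Om \<Longrightarrow> P w > 0 \<Longrightarrow>
      law P Om (\<lambda>w. (g w, h w)) (g w, h w) \<le> c * m (h w)"
  shows "rv_cond_entropy P Om g h \<ge> - log 2 c"
proof -
  have m_pos: "m (h w) > 0" if w: "w \<in> Om" and "P w > 0" for w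
  proof -
    have "P w \<le> law P Om (\<lambda>w. (g w, h w)) (g w, h w)"
      using fin nonneg w by (rule pmf_le_law)
    then have "0 < c * m (h w)"
      using law_le[OF w \<open>P w > 0\<close>] \<open>P w > 0\<close> by linarith
    then show ?thesis
      using c by (rule zero_less_mult_pos)
  qed
  have "rv_entropy P Om (\<lambda>w. (g w, h w)) \<ge> - log 2 c - (\<Sum>w\<in>Om. P w * log 2 (m (h w)))"
    using m_pos law_le by (intro rv_entropy_ge_of_law_le[OF fin nonneg sum1 c]) auto
  moreover have "rv_entropy P Om h \<le> - (\<Sum>w\<in>Om. P w * log 2 (m (h w)))"
    using m_pos by (intro rv_entropy_le_cross_entropy[OF fin nonneg sum1 m_nonneg m_sum])
  ultimately show ?thesis unfolding rv_cond_entropy_def by linarith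
qed

lemma sum_lists_length_prod:
  fixes f :: "'a::finite \<Rightarrow> 'r::comm_semiring_1"
  shows "(\<Sum>xs | length xs = n. \<Prod>i<n. f (xs ! i)) = (\<Sum>a\<in>UNIV. f a) ^ n"
proof (induction n)
  case 0
  have "{xs :: 'a list. length xs = 0} = {[]}" by auto
  then show ?case by simp
next
  case (Suc n)
  have lists_Suc:
    "{xs :: 'a list. length xs = Suc n} = (\<lambda>(a, xs). a # xs) ` (UNIV \<times> {xs. length xs = n})"
    by (auto simp: length_Suc_conv image_iff)
  have "(\<Sum>xs | length xs = Suc n. \<Prod>i<Suc n. f (xs ! i))
      = (\<Sum>(a, xs)\<in>UNIV \<times> {xs. length xs = n}. f a * (\<Prod>i<n. f (xs ! i)))"
    unfolding lists_Suc
    by (subst sum.reindex)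
      (auto simp: inj_on_def prod.lessThan_Suc_shift case_prod_beta simp del: prod.lessThan_Suc)
  also have "\<dots> = (\<Sum>a\<in>UNIV. f a) * (\<Sum>xs | length xs = n. \<Prod>i<n. f (xs ! i))"
    by (simp add: sum.cartesian_product sum_product)
  finally show ?case using Suc by simp
qed

definition seq_pairs :: "nat \<Rightarrow> ('a list \<times> 'b list) set" where
  "seq_pairs n = {(x1, x2). length x1 = n \<and> length x2 = n}"

lemma seq_pairs_eq_unzip:
  "seq_pairs n = (\<lambda>zs. (map fst zs, map snd zs)) ` {zs. length zs = n}"
proof -
  have "(x1, x2) \<in> (\<lambda>zs. (map fst zs, map snd zs)) ` {zs. length zs = n}"
    if "length x1 = n" "length x2 = n" for x1 :: "'a list" and x2 :: "'b list"
    using that by (intro image_eqI[of _ _ "zip x1 x2"]) auto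
  then show ?thesis by (auto simp: seq_pairs_def)
qed

lemma finite_seq_pairs: "finite (seq_pairs n :: ('a::finite list \<times> 'b::finite list) set)"
  unfolding seq_pairs_eq_unzip using finite_lists_length_eq[of "UNIV :: ('a \<times> 'b) set" n] by simp

lemma pn_nonneg: "(\<And>z. f z \<ge> 0) \<Longrightarrow> pn f n x1 x2 \<ge> 0"
  unfolding pn_def by (simp add: prod_nonneg)

lemma sum_seq_pairs_pn:
  fixes f :: "'a::finite \<times> 'b::finite \<Rightarrow> real"
  shows "(\<Sum>(x1, x2)\<in>seq_pairs n. pn f n x1 x2) = (\<Sum>z\<in>UNIV. f z) ^ n"
proof -
  have "inj_on (\<lambda>zs. (map fst zs, map snd zs)) X" for X :: "('a \<times> 'b) list set"
    by (rule inj_onI) (metis prod.inject zip_map_fst_snd)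
  then show ?thesis
    unfolding seq_pairs_eq_unzip
    by (simp add: sum.reindex pn_def sum_lists_length_prod)
qed

lemma sum_lists_length_prod_le_one:
  fixes m :: "'a::finite \<Rightarrow> real"
  assumes "\<And>a. m a \<ge> 0" and "(\<Sum>a\<in>UNIV. m a) = 1" and "A \<subseteq> {xs. length xs = n}"
  shows "(\<Sum>xs\<in>A. \<Prod>i<n. m (xs ! i)) \<le> 1"
proof -
  have "(\<Sum>xs\<in>A. \<Prod>i<n. m (xs ! i)) \<le> (\<Sum>xs | length xs = n. \<Prod>i<n. m (xs ! i))"
    using assms finite_lists_length_eq[of "UNIV :: 'a set" n]
    by (intro sum_mono2) (auto intro: prod_nonneg)
  also have "\<dots> = 1"
    using assms by (simp add: sum_lists_length_prod)
  finally show ?thesis .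
qed

lemma marg1_nonneg: "(\<And>z. p z \<ge> 0) \<Longrightarrow> marg1 p a \<ge> 0"
  unfolding marg1_def by (simp add: sum_nonneg)

lemma marg2_nonneg: "(\<And>z. p z \<ge> 0) \<Longrightarrow> marg2 p b \<ge> 0"
  unfolding marg2_def by (simp add: sum_nonneg)

lemma le_marg1: "(\<And>z. p z \<ge> 0) \<Longrightarrow> p (a, b) \<le> marg1 p a"
  unfolding marg1_def by (rule member_le_sum[of b UNIV "\<lambda>b. p (a, b)", simplified])

lemma le_marg2: "(\<And>z. p z \<ge> 0) \<Longrightarrow> p (a, b) \<le> marg2 p b"
  unfolding marg2_def by (rule member_le_sum[of a UNIV "\<lambda>a. p (a, b)", simplified])

lemma sum_marg1: "(\<Sum>a\<in>UNIV. marg1 p a) = (\<Sum>z\<in>UNIV. p z)"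
  unfolding marg1_def by (simp add: sum.cartesian_product)

lemma sum_marg2: "(\<Sum>b\<in>UNIV. marg2 p b) = (\<Sum>z\<in>UNIV. p z)"
  unfolding marg2_def by (subst sum.swap) (simp add: sum.cartesian_product)

lemma le_powr_of_typical:
  fixes q H \<gamma> :: real
  assumes q: "q > 0" and typical: "\<bar>1 / real n * log 2 (1 / q) - H\<bar> \<le> \<gamma>"
    and "n = 0 \<Longrightarrow> q = 1"
      \<comment> \<open>for \<open>n = 0\<close> typicality says nothing, as \<open>1 / real 0 = 0\<close>\<close>
  shows "q \<le> 2 powr (- (real n * (H - \<gamma>)))"
proof (cases "n = 0")
  case True
  then show ?thesis using assms by simp
next
  case False
  then have "real n * (H - \<gamma>) \<le> log 2 (1 / q)"
    using typical by (simp add: field_simps abs_le_iff)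
  then have "log 2 q \<le> - (real n * (H - \<gamma>))"
    using q by (simp add: log_divide)
  then show ?thesis
    using q by (simp add: le_powr_iff)
qed

lemma pn_1g2_eq: "pn_1g2 p n x1 x2 = pn p n x1 x2 / (\<Prod>i<n. marg2 p (x2 ! i))"
  unfolding pn_1g2_def pn_def by (rule prod_dividef)

lemma pn_2g1_eq: "pn_2g1 p n x1 x2 = pn p n x1 x2 / (\<Prod>i<n. marg1 p (x1 ! i))"
  unfolding pn_2g1_def pn_def by (rule prod_dividef)

lemma pn_pos_imp_factor_pos:
  assumes "\<And>z. p z \<ge> 0" and "pn p n x1 x2 > 0" and "i < n"
  shows "p (x1 ! i, x2 ! i) > 0"
  using assms by (fastforce simp: pn_def order.strict_iff_order)

lemma typ_set_pn_le:
  assumes p_nonneg: "\<And>z. p z \<ge> 0" and typical: "(x1, x2) \<in> typ_set p n \<gamma>"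
  shows "pn p n x1 x2 \<le> 2 powr (- (real n * (H1g2 p - \<gamma>))) * (\<Prod>i<n. marg2 p (x2 ! i))"
    and "pn p n x1 x2 \<le> 2 powr (- (real n * (H2g1 p - \<gamma>))) * (\<Prod>i<n. marg1 p (x1 ! i))"
    and "pn p n x1 x2 \<le> 2 powr (- (real n * (H12 p - \<gamma>)))"
proof -
  have pn_pos: "pn p n x1 x2 > 0"
    using typical by (simp add: typ_set_def)
  have M2_pos: "(\<Prod>i<n. marg2 p (x2 ! i)) > 0"
    using pn_pos_imp_factor_pos[OF p_nonneg pn_pos] le_marg2[of p, OF p_nonneg]
    by (intro prod_pos) (meson less_le_trans lessThan_iff)
  have M1_pos: "(\<Prod>i<n. marg1 p (x1 ! i)) > 0"
    using pn_pos_imp_factor_pos[OF p_nonneg pn_pos] le_marg1[of p, OF p_nonneg]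
    by (intro prod_pos) (meson less_le_trans lessThan_iff)
  have "pn_1g2 p n x1 x2 \<le> 2 powr (- (real n * (H1g2 p - \<gamma>)))"
    using typical pn_pos M2_pos
    by (intro le_powr_of_typical) (auto simp: typ_set_def pn_1g2_eq pn_def)
  then show "pn p n x1 x2 \<le> 2 powr (- (real n * (H1g2 p - \<gamma>))) * (\<Prod>i<n. marg2 p (x2 ! i))"
    using M2_pos by (simp add: pn_1g2_eq divide_le_eq)
  have "pn_2g1 p n x1 x2 \<le> 2 powr (- (real n * (H2g1 p - \<gamma>)))"
    using typical pn_pos M1_pos
    by (intro le_powr_of_typical) (auto simp: typ_set_def pn_2g1_eq pn_def)
  then show "pn p n x1 x2 \<le> 2 powr (- (real n * (H2g1 p - \<gamma>))) * (\<Prod>i<n. marg1 p (x1 ! i))"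
    using M1_pos by (simp add: pn_2g1_eq divide_le_eq)
  show "pn p n x1 x2 \<le> 2 powr (- (real n * (H12 p - \<gamma>)))"
    using typical pn_pos by (intro le_powr_of_typical) (auto simp: typ_set_def pn_def)
qed

lemma Omega_eq_seq_pairs:
  "Omega n = (\<lambda>((k1, k2), (x1, x2)). (k1, k2, x1, x2)) ` (seq_pairs n \<times> seq_pairs n)"
  by (force simp: Omega_def seq_pairs_def image_iff)

lemma finite_Omega: "finite (Omega n :: ('a::finite list \<times> 'b::finite list \<times> _) set)"
  unfolding Omega_eq_seq_pairs by (simp add: finite_seq_pairs)

lemma sum_Omega:
  "(\<Sum>w\<in>Omega n. f w)
     = (\<Sum>(k1, k2)\<in>seq_pairs n. \<Sum>(x1, x2)\<in>seq_pairs n. f (k1, k2, x1, x2))"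
  unfolding Omega_eq_seq_pairs
  by (subst sum.reindex) (auto simp: inj_on_def sum.cartesian_product case_prod_beta)

lemma Dtil_subset_seq_pairs: "Dtil p n \<gamma> \<phi>1 \<phi>2 \<psi> \<subseteq> seq_pairs n"
  by (auto simp: Dtil_def dec_set_def seq_pairs_def)

lemma sum_le_if_subsingleton:
  fixes f :: "'a \<Rightarrow> 'b::ordered_comm_monoid_add"
  assumes "\<And>x y. x \<in> A \<Longrightarrow> y \<in> A \<Longrightarrow> x = y" and "\<And>x. x \<in> A \<Longrightarrow> f x \<le> b" and "0 \<le> b"
  shows "sum f A \<le> b"
proof (cases "A = {}")
  case False
  then obtain x where "A = {x}"
    using assms(1) by blast
  then show ?thesis
    using assms(2) by simp
qed (simp add: assms(3))

locale keyed_source_code =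
  fixes p pk :: "'a::finite \<times> 'b::finite \<Rightarrow> real"
    and n :: nat and \<gamma> :: real
    and \<Phi>1 :: "'a list \<Rightarrow> 'a list \<Rightarrow> 'c"
    and \<Phi>2 :: "'b list \<Rightarrow> 'b list \<Rightarrow> 'd"
    and \<Psi> :: "'a list \<Rightarrow> 'b list \<Rightarrow> 'c \<Rightarrow> 'd \<Rightarrow> 'a list \<times> 'b list"
    and \<phi>1 :: "'a list \<Rightarrow> 'e" and \<phi>2 :: "'b list \<Rightarrow> 'f"
    and \<psi> :: "'e \<Rightarrow> 'f \<Rightarrow> 'a list \<times> 'b list"
  assumes p_nonneg: "\<And>z. p z \<ge> 0" and p_sum: "(\<Sum>z\<in>UNIV. p z) = 1"
    and pk_nonneg: "\<And>z. pk z \<ge> 0" and pk_sum: "(\<Sum>z\<in>UNIV. pk z) = 1"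
    and decode: "\<And>k1 k2 x1 x2. length k1 = n \<Longrightarrow> length k2 = n \<Longrightarrow> length x1 = n \<Longrightarrow> length x2 = n \<Longrightarrow>
        \<Psi> k1 k2 (\<Phi>1 k1 x1) (\<Phi>2 k2 x2) = \<psi> (\<phi>1 x1) (\<phi>2 x2)"
    and Q_pos: "Q12 p n \<gamma> \<phi>1 \<phi>2 \<psi> > 0"
begin

abbreviation "D \<equiv> Dtil p n \<gamma> \<phi>1 \<phi>2 \<psi>"
abbreviation "Q \<equiv> Q12 p n \<gamma> \<phi>1 \<phi>2 \<psi>"
abbreviation "P \<equiv> Ptil p pk n \<gamma> \<phi>1 \<phi>2 \<psi>"

lemma message_determined_by_ciphertexts:
  assumes "length k1 = n" and "length k2 = n" and "(x1, x2) \<in> D" and "(y1, y2) \<in> D"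
    and "\<Phi>1 k1 x1 = \<Phi>1 k1 y1" and "\<Phi>2 k2 x2 = \<Phi>2 k2 y2"
  shows "(x1, x2) = (y1, y2)"
proof -
  have "length x1 = n" "length x2 = n" "\<psi> (\<phi>1 x1) (\<phi>2 x2) = (x1, x2)"
    and "length y1 = n" "length y2 = n" "\<psi> (\<phi>1 y1) (\<phi>2 y2) = (y1, y2)"
    using assms(3,4) by (auto simp: Dtil_def dec_set_def)
  then have "(x1, x2) = \<Psi> k1 k2 (\<Phi>1 k1 x1) (\<Phi>2 k2 x2)"
    and "(y1, y2) = \<Psi> k1 k2 (\<Phi>1 k1 y1) (\<Phi>2 k2 y2)"
    using decode assms(1,2) by simp_all
  with assms(5,6) show ?thesis by simp
qed

lemma Ptil_nonneg: "P w \<ge> 0"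
  using Q_pos by (auto simp: Ptil_def pn_nonneg p_nonneg pk_nonneg split: prod.split)

lemma sum_Ptil: "(\<Sum>w\<in>Omega n. P w) = 1"
proof -
  have "(\<Sum>x\<in>seq_pairs n. if x \<in> D then pn p n (fst x) (snd x) / Q else 0)
      = (\<Sum>x\<in>D. pn p n (fst x) (snd x) / Q)"
    using Dtil_subset_seq_pairs[of p n \<gamma> \<phi>1 \<phi>2 \<psi>]
    by (simp add: finite_seq_pairs Int_absorb1 flip: sum.inter_restrict)
  also have "\<dots> = 1"
    using Q_pos by (simp add: Q12_def case_prod_beta flip: sum_divide_distrib)
  finally have source: "(\<Sum>(x1, x2)\<in>seq_pairs n. if (x1, x2) \<in> D then pn p n x1 x2 / Q else 0) = 1"
    by (simp add: case_prod_beta)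
  have "(\<Sum>w\<in>Omega n. P w) = (\<Sum>(k1, k2)\<in>seq_pairs n. pn pk n k1 k2 *
      (\<Sum>(x1, x2)\<in>seq_pairs n. if (x1, x2) \<in> D then pn p n x1 x2 / Q else 0))"
    by (auto simp: sum_Omega Ptil_def sum_distrib_left intro!: sum.cong)
  also have "\<dots> = 1"
    using source sum_seq_pairs_pn[of pk n] pk_sum by simp
  finally show ?thesis .
qed

lemma law_Ptil_le:
  assumes reveals_ciphertexts: "\<And>k1 k2 x1 x2 y1 y2. G (k1, k2, x1, x2) = G (k1, k2, y1, y2) \<Longrightarrow>
        \<Phi>1 k1 x1 = \<Phi>1 k1 y1 \<and> \<Phi>2 k2 x2 = \<Phi>2 k2 y2"
    and bound: "\<And>k1 k2 x1 x2. (x1, x2) \<in> D \<Longrightarrow> G (k1, k2, x1, x2) = v \<Longrightarrow> pn p n x1 x2 \<le> B"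
    and "B \<ge> 0"
  shows "law P (Omega n) G v \<le> B / Q"
proof -
  have fibre: "(\<Sum>(x1, x2)\<in>seq_pairs n. if G (k1, k2, x1, x2) = v \<and> (x1, x2) \<in> D
        then pn p n x1 x2 / Q else 0) \<le> B / Q"
    if "(k1, k2) \<in> seq_pairs n" for k1 k2
  proof -
    have "(\<Sum>(x1, x2)\<in>seq_pairs n. if G (k1, k2, x1, x2) = v \<and> (x1, x2) \<in> D
        then pn p n x1 x2 / Q else 0)
      = (\<Sum>(x1, x2)\<in>{x\<in>seq_pairs n. G (k1, k2, fst x, snd x) = v \<and> x \<in> D}. pn p n x1 x2 / Q)"
      by (simp add: finite_seq_pairs sum.inter_filter case_prod_beta)
    also have "\<dots> \<le> B / Q"
    proof (rule sum_le_if_subsingleton)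
      fix x y assume x: "x \<in> {x\<in>seq_pairs n. G (k1, k2, fst x, snd x) = v \<and> x \<in> D}"
        and y: "y \<in> {x\<in>seq_pairs n. G (k1, k2, fst x, snd x) = v \<and> x \<in> D}"
      obtain x1 x2 y1 y2 where "x = (x1, x2)" and "y = (y1, y2)"
        by fastforce
      then show "x = y"
        using x y that reveals_ciphertexts[of k1 k2 x1 x2 y1 y2]
          message_determined_by_ciphertexts[of k1 k2 x1 x2 y1 y2]
        by (auto simp: seq_pairs_def)
    qed (use bound Q_pos \<open>B \<ge> 0\<close> in \<open>auto simp: divide_right_mono\<close>)
    finally show ?thesis .
  qed
  have "law P (Omega n) G v = (\<Sum>w\<in>Omega n. if G w = v then P w else 0)"
    unfolding law_def by (simp add: finite_Omega sum.inter_filter)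
  also have "\<dots> = (\<Sum>(k1, k2)\<in>seq_pairs n. pn pk n k1 k2 * (\<Sum>(x1, x2)\<in>seq_pairs n.
      if G (k1, k2, x1, x2) = v \<and> (x1, x2) \<in> D then pn p n x1 x2 / Q else 0))"
    by (auto simp: sum_Omega Ptil_def sum_distrib_left case_prod_beta intro!: sum.cong)
  also have "\<dots> \<le> (\<Sum>(k1, k2)\<in>seq_pairs n. pn pk n k1 k2 * (B / Q))"
    using fibre
    by (intro sum_mono)
      (auto intro!: mult_left_mono pn_nonneg pk_nonneg simp del: times_divide_eq_right)
  also have "\<dots> = B / Q"
    using sum_seq_pairs_pn[of pk n] pk_sum
    by (simp add: case_prod_beta flip: sum_distrib_right sum_divide_distrib)
  finally show ?thesis .
qed

lemma rv_entropy_Ptil_ge: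
  assumes "c > 0"
    and reveals_ciphertexts: "\<And>k1 k2 x1 x2 y1 y2. G (k1, k2, x1, x2) = G (k1, k2, y1, y2) \<Longrightarrow>
        \<Phi>1 k1 x1 = \<Phi>1 k1 y1 \<and> \<Phi>2 k2 x2 = \<Phi>2 k2 y2"
    and bound: "\<And>x1 x2. (x1, x2) \<in> D \<Longrightarrow> pn p n x1 x2 \<le> c"
  shows "rv_entropy P (Omega n) G \<ge> - log 2 (c / Q)"
proof -
  have "law P (Omega n) G (G w) \<le> c / Q" for w
    by (rule law_Ptil_le[OF reveals_ciphertexts]) (use bound \<open>c > 0\<close> in simp_all)
  then have "rv_entropy P (Omega n) G \<ge> - log 2 (c / Q) - (\<Sum>w\<in>Omega n. P w * log 2 1)"
    using \<open>c > 0\<close> Q_pos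
    by (intro rv_entropy_ge_of_law_le) (auto simp: finite_Omega Ptil_nonneg sum_Ptil)
  then show ?thesis
    by simp
qed

lemma rv_cond_entropy_Ptil_ge:
  assumes "c > 0" and m_nonneg: "\<And>z. m z \<ge> 0" and m_sum: "(\<Sum>z\<in>H ` Omega n. m z) \<le> 1"
    and reveals_ciphertexts: "\<And>k1 k2 x1 x2 y1 y2. G (k1, k2, x1, x2) = G (k1, k2, y1, y2) \<Longrightarrow>
        H (k1, k2, x1, x2) = H (k1, k2, y1, y2) \<Longrightarrow> \<Phi>1 k1 x1 = \<Phi>1 k1 y1 \<and> \<Phi>2 k2 x2 = \<Phi>2 k2 y2"
    and bound: "\<And>k1 k2 x1 x2. (x1, x2) \<in> D \<Longrightarrow> pn p n x1 x2 \<le> c * m (H (k1, k2, x1, x2))"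
  shows "rv_cond_entropy P (Omega n) G H \<ge> - log 2 (c / Q)"
proof -
  have "law P (Omega n) (\<lambda>w. (G w, H w)) (G w, H w) \<le> c * m (H w) / Q" for w
  proof (rule law_Ptil_le)
    fix k1 k2 x1 x2 y1 y2
    assume "(G (k1, k2, x1, x2), H (k1, k2, x1, x2)) = (G (k1, k2, y1, y2), H (k1, k2, y1, y2))"
    then show "\<Phi>1 k1 x1 = \<Phi>1 k1 y1 \<and> \<Phi>2 k2 x2 = \<Phi>2 k2 y2"
      by (intro reveals_ciphertexts) simp_all
  next
    fix k1 k2 x1 x2
    assume "(x1, x2) \<in> D" and "(G (k1, k2, x1, x2), H (k1, k2, x1, x2)) = (G w, H w)"
    then show "pn p n x1 x2 \<le> c * m (H w)"
      using bound[of x1 x2 k1 k2] by simp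
  qed (use \<open>c > 0\<close> m_nonneg in simp)
  then show ?thesis
    using \<open>c > 0\<close> Q_pos m_nonneg m_sum
    by (intro rv_cond_entropy_ge_of_law_le) (auto simp: finite_Omega Ptil_nonneg sum_Ptil)
qed

lemma cond_entropy_C1_given_X2_ge:
  "rv_cond_entropy P (Omega n) (\<lambda>(k1, k2, x1, x2). \<Phi>1 k1 x1) (\<lambda>(k1, k2, x1, x2). x2)
     \<ge> real n * (H1g2 p - \<gamma>) + log 2 Q"
proof -
  define m where "m x2 = (\<Prod>i<n. marg2 p (x2 ! i))" for x2 :: "'b list"
  have "rv_cond_entropy P (Omega n) (\<lambda>(k1, k2, x1, x2). \<Phi>1 k1 x1) (\<lambda>(k1, k2, x1, x2). x2)
      \<ge> - log 2 (2 powr (- (real n * (H1g2 p - \<gamma>))) / Q)"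
  proof (rule rv_cond_entropy_Ptil_ge[where m = m])
    show "(\<Sum>x2\<in>(\<lambda>(k1, k2, x1, x2). x2) ` Omega n. m x2) \<le> 1"
      unfolding m_def using p_sum
      by (intro sum_lists_length_prod_le_one) (auto simp: Omega_def marg2_nonneg p_nonneg sum_marg2)
  qed (auto simp: m_def Dtil_def prod_nonneg marg2_nonneg p_nonneg
      typ_set_pn_le(1)[of p, OF p_nonneg])
  then show ?thesis
    using Q_pos by (simp add: log_divide)
qed

lemma cond_entropy_C2_given_X1_ge:
  "rv_cond_entropy P (Omega n) (\<lambda>(k1, k2, x1, x2). \<Phi>2 k2 x2) (\<lambda>(k1, k2, x1, x2). x1)
     \<ge> real n * (H2g1 p - \<gamma>) + log 2 Q"
proof -
  define m where "m x1 = (\<Prod>i<n. marg1 p (x1 ! i))" for x1 :: "'a list"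
  have "rv_cond_entropy P (Omega n) (\<lambda>(k1, k2, x1, x2). \<Phi>2 k2 x2) (\<lambda>(k1, k2, x1, x2). x1)
      \<ge> - log 2 (2 powr (- (real n * (H2g1 p - \<gamma>))) / Q)"
  proof (rule rv_cond_entropy_Ptil_ge[where m = m])
    show "(\<Sum>x1\<in>(\<lambda>(k1, k2, x1, x2). x1) ` Omega n. m x1) \<le> 1"
      unfolding m_def using p_sum
      by (intro sum_lists_length_prod_le_one) (auto simp: Omega_def marg1_nonneg p_nonneg sum_marg1)
  qed (auto simp: m_def Dtil_def prod_nonneg marg1_nonneg p_nonneg
      typ_set_pn_le(2)[of p, OF p_nonneg])
  then show ?thesis
    using Q_pos by (simp add: log_divide)
qed

lemma entropy_C1_C2_ge:
  "rv_entropy P (Omega n) (\<lambda>(k1, k2, x1, x2). (\<Phi>1 k1 x1, \<Phi>2 k2 x2))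
     \<ge> real n * (H12 p - \<gamma>) + log 2 Q"
proof -
  have "rv_entropy P (Omega n) (\<lambda>(k1, k2, x1, x2). (\<Phi>1 k1 x1, \<Phi>2 k2 x2))
      \<ge> - log 2 (2 powr (- (real n * (H12 p - \<gamma>))) / Q)"
    by (rule rv_entropy_Ptil_ge) (auto simp: Dtil_def typ_set_pn_le(3)[of p, OF p_nonneg])
  then show ?thesis
    using Q_pos by (simp add: log_divide)
qed

end

theorem lemma3:
  fixes p pk :: "'a::finite \<times> 'b::finite \<Rightarrow> real"
    and n :: nat and \<gamma> :: real
    and \<Phi>1 :: "'a list \<Rightarrow> 'a list \<Rightarrow> 'c"
    and \<Phi>2 :: "'b list \<Rightarrow> 'b list \<Rightarrow> 'd"
    and \<Psi> :: "'a list \<Rightarrow> 'b list \<Rightarrow> 'c \<Rightarrow> 'd \<Rightarrow> 'a list \<times> 'b list"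
    and \<phi>1 :: "'a list \<Rightarrow> 'e" and \<phi>2 :: "'b list \<Rightarrow> 'f"
    and \<psi> :: "'e \<Rightarrow> 'f \<Rightarrow> 'a list \<times> 'b list"
  assumes p_nonneg: "\<And>z. p z \<ge> 0" and p_sum: "(\<Sum>z\<in>UNIV. p z) = 1"
    and pk_nonneg: "\<And>z. pk z \<ge> 0" and pk_sum: "(\<Sum>z\<in>UNIV. pk z) = 1"
    and decode: "\<And>k1 k2 x1 x2. length k1 = n \<Longrightarrow> length k2 = n \<Longrightarrow> length x1 = n \<Longrightarrow> length x2 = n \<Longrightarrow>
        \<Psi> k1 k2 (\<Phi>1 k1 x1) (\<Phi>2 k2 x2) = \<psi> (\<phi>1 x1) (\<phi>2 x2)"
    and gamma_pos: "\<gamma> > 0"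
    and Q_pos: "Q12 p n \<gamma> \<phi>1 \<phi>2 \<psi> > 0"
  shows "(rv_cond_entropy (Ptil p pk n \<gamma> \<phi>1 \<phi>2 \<psi>) (Omega n)
           (\<lambda>(k1, k2, x1, x2). \<Phi>1 k1 x1) (\<lambda>(k1, k2, x1, x2). x2)
         \<ge> real n * (H1g2 p - \<gamma>) + log 2 (Q12 p n \<gamma> \<phi>1 \<phi>2 \<psi>)) \<and>
         (rv_cond_entropy (Ptil p pk n \<gamma> \<phi>1 \<phi>2 \<psi>) (Omega n)
           (\<lambda>(k1, k2, x1, x2). \<Phi>2 k2 x2) (\<lambda>(k1, k2, x1, x2). x1)
         \<ge> real n * (H2g1 p - \<gamma>) + log 2 (Q12 p n \<gamma> \<phi>1 \<phi>2 \<psi>)) \<and>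
         (rv_entropy (Ptil p pk n \<gamma> \<phi>1 \<phi>2 \<psi>) (Omega n)
           (\<lambda>(k1, k2, x1, x2). (\<Phi>1 k1 x1, \<Phi>2 k2 x2))
         \<ge> real n * (H12 p - \<gamma>) + log 2 (Q12 p n \<gamma> \<phi>1 \<phi>2 \<psi>))"
proof -
  interpret keyed_source_code p pk n \<gamma> \<Phi>1 \<Phi>2 \<Psi> \<phi>1 \<phi>2 \<psi>
    using p_nonneg p_sum pk_nonneg pk_sum decode Q_pos by (rule keyed_source_code.intro)
  show ?thesis
    using cond_entropy_C1_given_X2_ge cond_entropy_C2_given_X1_ge entropy_C1_C2_ge by blast
qed

end
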